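(* Let $A\subset\mathcal X$ be nonempty and $x\notin A$. For a path $\omega$: $\omega\in\Omega^{\rm opt}_{x,A}$ if and only if $\omega\in\Omega_{x,A}$ and every state of $\omega$ belongs to $C^+_A(x)$.
   Context: Setting: $\mathcal X$ finite, $H:\mathcal X\to\mathbb R$ non-constant, $q$ a stochastic, symmetric, irreducible matrix on $\mathcal X$. A path is a finite sequence $\omega=(\omega_1,\dots,\omega_n)$ with $q(\omega_i,\omega_{i+1})>0$ ($n=1$ allowed). $\Phi_\omega=\max_iH(\omega_i)$, $\Phi(x,y)=\min$ of $\Phi_\omega$ over paths from $x$ to $y$, $\Phi(B,D)=\min_{x\in B,y\in D}\Phi(x,y)$. $\Omega_{x,A}$ = paths from $x$ ending in $A$ and not visiting $A$ before their last state; $\Omega^{\rm opt}_{x,A}=\{\omega\in\Omega_{x,A}:\Phi_\omega=\Phi(x,A)\}$. Connected set: at least two elements, any two joined by a path inside it. $\partial B=\{y\notin B:\exists x\in B,q(x,y)>0\}$. A cycle is a nonempty $C$ that is a singleton or connected with $\max_CH<\min_{\partial C}H$. Initial cycle $C_A(x)=\{x\}\cup\{z:\Phi(x,z)<\Phi(x,A)\}$. Relevant cycle $C^+_A(x)$: the minimal (for inclusion) cycle $C$ with $C_A(x)\subsetneq C$ (cycles containing $x$ are totally ordered by inclusion). Convention: $A$ contains every $y$ such that every path from $x$ to $y$ meets $A$. *)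

theory Defs
  imports Complex_Main
begin

definition is_path :: "('a \<Rightarrow> 'a \<Rightarrow> real) \<Rightarrow> 'a list \<Rightarrow> bool" where
  "is_path q w \<longleftrightarrow> w \<noteq> [] \<and> (\<forall>i. Suc i < length w \<longrightarrow> q (w ! i) (w ! Suc i) > 0)"

definition PhiP :: "('a \<Rightarrow> real) \<Rightarrow> 'a list \<Rightarrow> real" where
  "PhiP H w = Max (H ` set w)"

definition Phi :: "('a \<Rightarrow> 'a \<Rightarrow> real) \<Rightarrow> ('a \<Rightarrow> real) \<Rightarrow> 'a \<Rightarrow> 'a \<Rightarrow> real" where
  "Phi q H x y = Min {PhiP H w | w. is_path q w \<and> hd w = x \<and> last w = y}"

definition PhiSet :: "('a \<Rightarrow> 'a \<Rightarrow> real) \<Rightarrow> ('a \<Rightarrow> real) \<Rightarrow> 'a set \<Rightarrow> 'a set \<Rightarrow> real" where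
  "PhiSet q H B D = Min {Phi q H x y | x y. x \<in> B \<and> y \<in> D}"

definition Omega :: "('a \<Rightarrow> 'a \<Rightarrow> real) \<Rightarrow> 'a \<Rightarrow> 'a set \<Rightarrow> 'a list set" where
  "Omega q x A = {w. is_path q w \<and> hd w = x \<and> last w \<in> A \<and>
                     (\<forall>i. Suc i < length w \<longrightarrow> w ! i \<notin> A)}"

definition Omega_opt :: "('a \<Rightarrow> 'a \<Rightarrow> real) \<Rightarrow> ('a \<Rightarrow> real) \<Rightarrow> 'a \<Rightarrow> 'a set \<Rightarrow> 'a list set" where
  "Omega_opt q H x A = {w \<in> Omega q x A. PhiP H w = PhiSet q H {x} A}"

definition connected_set :: "('a \<Rightarrow> 'a \<Rightarrow> real) \<Rightarrow> 'a set \<Rightarrow> bool" where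
  "connected_set q C \<longleftrightarrow> (\<exists>a b. a \<in> C \<and> b \<in> C \<and> a \<noteq> b) \<and>
     (\<forall>a\<in>C. \<forall>b\<in>C. \<exists>w. is_path q w \<and> hd w = a \<and> last w = b \<and> set w \<subseteq> C)"

definition boundary :: "('a \<Rightarrow> 'a \<Rightarrow> real) \<Rightarrow> 'a set \<Rightarrow> 'a set" where
  "boundary q B = {y. y \<notin> B \<and> (\<exists>x\<in>B. q x y > 0)}"

text \<open>Cycle: nonempty, and either a singleton or connected with max_C H < min_{boundary C} H
  (the latter condition holds vacuously when the boundary is empty, min over empty set = +infinity).\<close>
definition is_cycle :: "('a \<Rightarrow> 'a \<Rightarrow> real) \<Rightarrow> ('a \<Rightarrow> real) \<Rightarrow> 'a set \<Rightarrow> bool" where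
  "is_cycle q H C \<longleftrightarrow> C \<noteq> {} \<and>
     ((\<exists>z. C = {z}) \<or> (connected_set q C \<and> (\<forall>z\<in>C. \<forall>y\<in>boundary q C. H z < H y)))"

definition init_cycle :: "('a \<Rightarrow> 'a \<Rightarrow> real) \<Rightarrow> ('a \<Rightarrow> real) \<Rightarrow> 'a set \<Rightarrow> 'a \<Rightarrow> 'a set" where
  "init_cycle q H A x = {x} \<union> {z. Phi q H x z < PhiSet q H {x} A}"

definition rel_cycle :: "('a \<Rightarrow> 'a \<Rightarrow> real) \<Rightarrow> ('a \<Rightarrow> real) \<Rightarrow> 'a set \<Rightarrow> 'a \<Rightarrow> 'a set" where
  "rel_cycle q H A x = (LEAST C. is_cycle q H C \<and> init_cycle q H A x \<subset> C)"

definition stochastic :: "('a::finite \<Rightarrow> 'a \<Rightarrow> real) \<Rightarrow> bool" where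
  "stochastic q \<longleftrightarrow> (\<forall>x y. 0 \<le> q x y) \<and> (\<forall>x. (\<Sum>y\<in>UNIV. q x y) = 1)"

definition symmetric_kernel :: "('a \<Rightarrow> 'a \<Rightarrow> real) \<Rightarrow> bool" where
  "symmetric_kernel q \<longleftrightarrow> (\<forall>x y. q x y = q y x)"

definition irreducible_kernel :: "('a \<Rightarrow> 'a \<Rightarrow> real) \<Rightarrow> bool" where
  "irreducible_kernel q \<longleftrightarrow> (\<forall>x y. \<exists>w. is_path q w \<and> hd w = x \<and> last w = y)"

end

theory Submission
  imports Defs
begin

text \<open>Write \<open>h = \<Phi>(x, A)\<close> and \<open>K = {z. \<Phi>(x, z) \<le> h}\<close>. An optimal path from \<open>x\<close> never rises
  above \<open>h\<close>, so it stays in \<open>K\<close>; conversely a path of \<open>\<Omega>\<^sub>x\<^sub>,\<^sub>A\<close> inside \<open>K\<close> has height \<open>\<le> h\<close>.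
  It remains to identify \<open>K\<close> with \<open>C\<^sup>+\<^sub>A(x)\<close>. By symmetry of \<open>q\<close>, paths from \<open>x\<close> can be reversed
  and glued, so \<open>K\<close> is connected, and every boundary point of \<open>K\<close> lies above \<open>h \<ge> max\<^sub>K H\<close>;
  hence \<open>K\<close> is a cycle, which contains a minimiser \<open>a \<in> A\<close> of \<open>\<Phi>(x, \<cdot>)\<close> missing from \<open>C\<^sub>A(x)\<close>.
  Any cycle \<open>C \<supset> C\<^sub>A(x)\<close> contains a state \<open>z\<close> with \<open>\<Phi>(x, z) \<ge> h\<close>, so a path from \<open>x\<close> to \<open>z\<close>
  inside \<open>C\<close> reaches height \<open>h\<close>; then the boundary of \<open>C\<close> lies above \<open>h\<close>, and paths from \<open>x\<close>
  inside \<open>K\<close> can never leave \<open>C\<close>.\<close>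

lemma is_path_nonempty: "is_path q w \<Longrightarrow> w \<noteq> []"
  by (simp add: is_path_def)

lemma is_path_singleton: "is_path q [x]"
  by (simp add: is_path_def)

lemma is_path_take: "is_path q w \<Longrightarrow> i < length w \<Longrightarrow> is_path q (take (Suc i) w)"
  unfolding is_path_def by auto

lemma is_path_tl: "is_path q w \<Longrightarrow> tl w \<noteq> [] \<Longrightarrow> is_path q (tl w)"
  unfolding is_path_def by (auto simp: nth_tl)

lemma is_path_append:
  assumes "is_path q u" "is_path q v" "q (last u) (hd v) > 0"
  shows "is_path q (u @ v)"
  unfolding is_path_def
proof (intro conjI allI impI)
  show "u @ v \<noteq> []" using assms by (simp add: is_path_def)
next
  fix i assume i: "Suc i < length (u @ v)"
  have u: "u \<noteq> []" "\<forall>i. Suc i < length u \<longrightarrow> q (u ! i) (u ! Suc i) > 0"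
    and v: "v \<noteq> []" "\<forall>i. Suc i < length v \<longrightarrow> q (v ! i) (v ! Suc i) > 0"
    using assms by (auto simp: is_path_def)
  consider "Suc i < length u" | "Suc i = length u" | "Suc i > length u" by linarith
  then show "q ((u @ v) ! i) ((u @ v) ! Suc i) > 0"
  proof cases
    case 1
    then show ?thesis using u by (simp add: nth_append)
  next
    case 2
    then have "i = length u - Suc 0" by simp
    then show ?thesis using assms(3) u v by (simp add: nth_append last_conv_nth hd_conv_nth)
  next
    case 3
    define j where "j = i - length u"
    have "i = length u + j" "Suc j < length v" using 3 i by (auto simp: j_def)
    then show ?thesis using v by (simp add: nth_append)
  qed
qed

lemma is_path_rev:
  assumes "symmetric_kernel q" "is_path q w"
  shows "is_path q (rev w)"
  unfolding is_path_def
proof (intro conjI allI impI)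
  show "rev w \<noteq> []" using assms(2) by (simp add: is_path_def)
next
  fix i assume i: "Suc i < length (rev w)"
  define j where "j = length w - Suc (Suc i)"
  have j: "Suc j < length w" "length w - Suc i = Suc j"
    using i by (auto simp: j_def)
  have "q (w ! j) (w ! Suc j) > 0" using assms(2) j by (simp add: is_path_def)
  then show "q (rev w ! i) (rev w ! Suc i) > 0"
    using i j assms(1) by (simp add: rev_nth symmetric_kernel_def j_def)
qed

lemma path_join_at_start:
  assumes "symmetric_kernel q"
    and p: "is_path q p" "hd p = x" "last p = b"
    and r: "is_path q r" "hd r = x" "last r = c"
  obtains w where "is_path q w" "hd w = b" "last w = c" "set w \<subseteq> set p \<union> set r"
proof (cases "tl r = []")
  case True
  then have "r = [x]" using r is_path_nonempty[OF r(1)] by (cases r) auto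
  then have "c = x" using r by simp
  moreover have "hd (rev p) = b" "last (rev p) = x"
    using p is_path_nonempty[OF p(1)] by (auto simp: hd_rev last_rev)
  ultimately show ?thesis using that[of "rev p"] is_path_rev[OF assms(1) p(1)] by auto
next
  case False
  have "q x (hd (tl r)) > 0"
    using r(1,2) False unfolding is_path_def by (cases r) (auto simp: hd_conv_nth)
  then have "is_path q (rev p @ tl r)"
    using p is_path_nonempty[OF p(1)]
    by (intro is_path_append is_path_rev is_path_tl assms(1) r(1) False) (auto simp: last_rev)
  moreover have "set (tl r) \<subseteq> set r" by (cases r) auto
  ultimately show ?thesis
    using that[of "rev p @ tl r"] p r False is_path_nonempty[OF p(1)] by (auto simp: hd_rev last_tl)
qed

lemma path_within_set:
  assumes "is_path q r" "hd r \<in> C" "set r \<inter> boundary q C = {}"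
  shows "set r \<subseteq> C"
proof -
  have "r ! i \<in> C" if "i < length r" for i
    using that
  proof (induction i)
    case 0
    then show ?case using assms(2) by (simp add: hd_conv_nth)
  next
    case (Suc i)
    have "q (r ! i) (r ! Suc i) > 0" using assms(1) Suc.prems by (simp add: is_path_def)
    moreover have "r ! Suc i \<notin> boundary q C" using assms(3) Suc.prems nth_mem by blast
    ultimately show ?case using Suc by (auto simp: boundary_def)
  qed
  then show ?thesis by (auto simp: in_set_conv_nth)
qed

lemma PhiP_ge: "z \<in> set w \<Longrightarrow> H z \<le> PhiP H w"
  unfolding PhiP_def by (intro Max_ge) auto

lemma PhiP_in: "w \<noteq> [] \<Longrightarrow> PhiP H w \<in> H ` set w"
  unfolding PhiP_def by (intro Max_in) auto

lemma PhiP_le_iff: "w \<noteq> [] \<Longrightarrow> PhiP H w \<le> c \<longleftrightarrow> (\<forall>z\<in>set w. H z \<le> c)"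
  unfolding PhiP_def by (subst Max_le_iff) auto

lemma PhiP_mono: "w \<noteq> [] \<Longrightarrow> set w \<subseteq> set v \<Longrightarrow> PhiP H w \<le> PhiP H v"
  unfolding PhiP_def by (rule Max_mono) auto

lemma finite_path_heights:
  fixes H :: "'a::finite \<Rightarrow> real"
  shows "finite {PhiP H w | w. is_path q w \<and> hd w = x \<and> last w = y}"
  by (rule finite_subset[of _ "range H"]) (auto dest!: is_path_nonempty dest: PhiP_in[of _ H])

lemma Phi_le_PhiP:
  fixes H :: "'a::finite \<Rightarrow> real"
  assumes "is_path q w" "hd w = x" "last w = y"
  shows "Phi q H x y \<le> PhiP H w"
  unfolding Phi_def using assms by (intro Min_le finite_path_heights) auto

lemma Phi_le_PhiP_prefix:
  fixes H :: "'a::finite \<Rightarrow> real"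
  assumes "is_path q w" "hd w = x" "z \<in> set w"
  shows "Phi q H x z \<le> PhiP H w"
proof -
  obtain i where i: "i < length w" "w ! i = z" using assms(3) by (auto simp: in_set_conv_nth)
  have "Phi q H x z \<le> PhiP H (take (Suc i) w)"
    using assms i is_path_nonempty[OF assms(1)]
    by (intro Phi_le_PhiP is_path_take) (auto simp: take_Suc_conv_app_nth hd_append hd_conv_nth)
  also have "\<dots> \<le> PhiP H w"
    using i by (intro PhiP_mono) (auto dest: in_set_takeD)
  finally show ?thesis .
qed

lemma Phi_attained:
  fixes H :: "'a::finite \<Rightarrow> real"
  assumes "irreducible_kernel q"
  obtains w where "is_path q w" "hd w = x" "last w = y" "Phi q H x y = PhiP H w"
proof -
  let ?S = "{PhiP H w | w. is_path q w \<and> hd w = x \<and> last w = y}"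
  have "finite ?S" by (rule finite_path_heights)
  moreover have "?S \<noteq> {}" using assms unfolding irreducible_kernel_def by blast
  ultimately have "Phi q H x y \<in> ?S" unfolding Phi_def by (rule Min_in)
  then show ?thesis using that by auto
qed

lemma Phi_ge_H:
  fixes H :: "'a::finite \<Rightarrow> real"
  assumes "irreducible_kernel q"
  shows "H x \<le> Phi q H x y" "H y \<le> Phi q H x y"
proof -
  obtain w where w: "is_path q w" "hd w = x" "last w = y" "Phi q H x y = PhiP H w"
    using Phi_attained[OF assms] .
  have "x \<in> set w" "y \<in> set w" using w is_path_nonempty[OF w(1)] by auto
  then show "H x \<le> Phi q H x y" "H y \<le> Phi q H x y" using w(4) PhiP_ge by metis+
qed

lemma Phi_self_le:
  fixes H :: "'a::finite \<Rightarrow> real"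
  shows "Phi q H x x \<le> H x"
proof -
  have "Phi q H x x \<le> PhiP H [x]" by (rule Phi_le_PhiP) (auto intro: is_path_singleton)
  then show ?thesis by (simp add: PhiP_def)
qed

lemma PhiSet_singleton: "PhiSet q H {x} A = Min (Phi q H x ` A)"
  unfolding PhiSet_def by (rule arg_cong[where f = Min]) auto

definition Phi_sublevel :: "('a \<Rightarrow> 'a \<Rightarrow> real) \<Rightarrow> ('a \<Rightarrow> real) \<Rightarrow> 'a \<Rightarrow> real \<Rightarrow> 'a set" where
  "Phi_sublevel q H x h = {z. Phi q H x z \<le> h}"

context
  fixes q :: "'a::finite \<Rightarrow> 'a \<Rightarrow> real" and H :: "'a \<Rightarrow> real" and x :: 'a and h :: real
  assumes irr: "irreducible_kernel q"
begin

lemma H_le_on_Phi_sublevel: "z \<in> Phi_sublevel q H x h \<Longrightarrow> H z \<le> h"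
  using Phi_ge_H(2)[OF irr, where H = H and x = x and y = z] by (simp add: Phi_sublevel_def)

lemma path_within_Phi_sublevel:
  assumes "z \<in> Phi_sublevel q H x h"
  obtains p where "is_path q p" "hd p = x" "last p = z" "set p \<subseteq> Phi_sublevel q H x h"
proof -
  obtain p where p: "is_path q p" "hd p = x" "last p = z" "Phi q H x z = PhiP H p"
    using Phi_attained[OF irr] .
  have "set p \<subseteq> Phi_sublevel q H x h"
  proof
    fix v assume "v \<in> set p"
    then have "Phi q H x v \<le> Phi q H x z" by (metis Phi_le_PhiP_prefix[OF p(1,2)] p(4))
    then show "v \<in> Phi_sublevel q H x h" using assms by (simp add: Phi_sublevel_def)
  qed
  then show ?thesis using that p by blast
qed

lemma boundary_Phi_sublevel_gt: "y \<in> boundary q (Phi_sublevel q H x h) \<Longrightarrow> h < H y"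
proof (rule ccontr)
  assume "y \<in> boundary q (Phi_sublevel q H x h)" and "\<not> h < H y"
  then obtain z where z: "z \<in> Phi_sublevel q H x h" "q z y > 0" "y \<notin> Phi_sublevel q H x h"
    by (auto simp: boundary_def)
  obtain p where p: "is_path q p" "hd p = x" "last p = z" "set p \<subseteq> Phi_sublevel q H x h"
    using path_within_Phi_sublevel[OF z(1)] .
  have "is_path q (p @ [y])" using p z by (intro is_path_append is_path_singleton) auto
  then have "Phi q H x y \<le> PhiP H (p @ [y])"
    using p is_path_nonempty[OF p(1)] by (intro Phi_le_PhiP) auto
  also have "\<dots> \<le> h"
    using p \<open>\<not> h < H y\<close> H_le_on_Phi_sublevel by (subst PhiP_le_iff) auto
  finally show False using z(3) by (simp add: Phi_sublevel_def)
qed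

lemma is_cycle_Phi_sublevel:
  assumes sym: "symmetric_kernel q" and "H x \<le> h"
  shows "is_cycle q H (Phi_sublevel q H x h)" (is "is_cycle q H ?K")
proof -
  have "x \<in> ?K" using Phi_self_le[of q H x] assms(2) by (simp add: Phi_sublevel_def)
  moreover have "connected_set q ?K" if "\<nexists>z. ?K = {z}"
    unfolding connected_set_def
  proof (intro conjI ballI)
    show "\<exists>a b. a \<in> ?K \<and> b \<in> ?K \<and> a \<noteq> b" using that \<open>x \<in> ?K\<close> by blast
  next
    fix b c assume "b \<in> ?K" "c \<in> ?K"
    obtain p where p: "is_path q p" "hd p = x" "last p = b" "set p \<subseteq> ?K"
      using path_within_Phi_sublevel[OF \<open>b \<in> ?K\<close>] .
    obtain r where r: "is_path q r" "hd r = x" "last r = c" "set r \<subseteq> ?K"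
      using path_within_Phi_sublevel[OF \<open>c \<in> ?K\<close>] .
    obtain w where "is_path q w" "hd w = b" "last w = c" "set w \<subseteq> set p \<union> set r"
      using path_join_at_start[OF sym p(1-3) r(1-3)] .
    then show "\<exists>w. is_path q w \<and> hd w = b \<and> last w = c \<and> set w \<subseteq> ?K"
      using p(4) r(4) by blast
  qed
  moreover have "H z < H y" if "z \<in> ?K" "y \<in> boundary q ?K" for z y
    using H_le_on_Phi_sublevel[OF that(1)] boundary_Phi_sublevel_gt[OF that(2)] by simp
  ultimately show ?thesis unfolding is_cycle_def by blast
qed

lemma cycle_contains_Phi_sublevel:
  assumes C: "is_cycle q H C" "\<nexists>z. C = {z}" "x \<in> C"
    and z: "z \<in> C" "h \<le> Phi q H x z"
  shows "Phi_sublevel q H x h \<subseteq> C"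
proof -
  have con: "connected_set q C" and bd: "\<forall>v\<in>C. \<forall>y\<in>boundary q C. H v < H y"
    using C(1,2) by (auto simp: is_cycle_def)
  obtain p where p: "is_path q p" "hd p = x" "last p = z" "set p \<subseteq> C"
    using con C(3) z(1) unfolding connected_set_def by blast
  obtain m where m: "m \<in> set p" "PhiP H p = H m" using PhiP_in[OF is_path_nonempty[OF p(1)]] by auto
  have "m \<in> C" "h \<le> H m" using m p z(2) Phi_le_PhiP[OF p(1-3), of H] by auto
  then have boundary_high: "h < H v" if "v \<in> boundary q C" for v
    using bd that by fastforce
  show ?thesis
  proof
    fix y assume "y \<in> Phi_sublevel q H x h"
    then obtain r where r: "is_path q r" "hd r = x" "last r = y" "set r \<subseteq> Phi_sublevel q H x h"
      by (rule path_within_Phi_sublevel)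
    have "set r \<inter> boundary q C = {}"
      using r(4) H_le_on_Phi_sublevel boundary_high by (meson disjoint_iff not_less subsetD)
    then have "set r \<subseteq> C" using path_within_set[OF r(1)] r(2) C(3) by simp
    then show "y \<in> C" using r(3) is_path_nonempty[OF r(1)] by auto
  qed
qed

end

lemma PhiSet_singleton_attained:
  fixes q :: "'a::finite \<Rightarrow> 'a \<Rightarrow> real"
  assumes "A \<noteq> {}"
  obtains a where "a \<in> A" "Phi q H x a = PhiSet q H {x} A"
proof -
  have "Min (Phi q H x ` A) \<in> Phi q H x ` A" using assms by (intro Min_in) auto
  then show ?thesis using that by (auto simp: PhiSet_singleton)
qed

lemma PhiSet_singleton_le: "y \<in> A \<Longrightarrow> PhiSet q H {x} A \<le> Phi q H x (y::'a::finite)"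
  by (simp add: PhiSet_singleton)

lemma rel_cycle_eq_Phi_sublevel:
  fixes q :: "'a::finite \<Rightarrow> 'a \<Rightarrow> real"
  assumes sym: "symmetric_kernel q" and irr: "irreducible_kernel q"
    and "A \<noteq> {}" "x \<notin> A"
  shows "rel_cycle q H A x = Phi_sublevel q H x (PhiSet q H {x} A)"
proof -
  define h where "h = PhiSet q H {x} A"
  obtain a where a: "a \<in> A" "Phi q H x a = h"
    using PhiSet_singleton_attained[OF assms(3)] unfolding h_def .
  have "H x \<le> h" using Phi_ge_H(1)[OF irr] a(2) by metis
  have init_sub: "init_cycle q H A x \<subset> Phi_sublevel q H x h"
  proof -
    have "init_cycle q H A x \<subseteq> Phi_sublevel q H x h"
      using Phi_self_le[of q H x] \<open>H x \<le> h\<close>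
      unfolding init_cycle_def Phi_sublevel_def h_def by auto
    moreover have "a \<in> Phi_sublevel q H x h - init_cycle q H A x"
      using a assms(4) unfolding init_cycle_def Phi_sublevel_def h_def by auto
    ultimately show ?thesis by blast
  qed
  have least: "Phi_sublevel q H x h \<subseteq> C" if C: "is_cycle q H C \<and> init_cycle q H A x \<subset> C" for C
  proof -
    have "x \<in> C" using C unfolding init_cycle_def by blast
    moreover have "\<nexists>z. C = {z}" using C unfolding init_cycle_def by auto
    moreover obtain z where "z \<in> C" "z \<notin> init_cycle q H A x" using C by blast
    moreover have "h \<le> Phi q H x z" using \<open>z \<notin> init_cycle q H A x\<close>
      unfolding init_cycle_def h_def by auto
    ultimately show ?thesis using C by (intro cycle_contains_Phi_sublevel[OF irr]) auto
  qed
  show ?thesis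
    unfolding rel_cycle_def h_def[symmetric]
  proof (rule Least_equality)
    show "is_cycle q H (Phi_sublevel q H x h) \<and> init_cycle q H A x \<subset> Phi_sublevel q H x h"
      using is_cycle_Phi_sublevel[OF irr sym, where H = H and x = x and h = h, OF \<open>H x \<le> h\<close>] init_sub
      by blast
  qed (rule least)
qed

lemma Omega_opt_iff_Phi_sublevel:
  fixes q :: "'a::finite \<Rightarrow> 'a \<Rightarrow> real"
  assumes irr: "irreducible_kernel q"
  shows "w \<in> Omega_opt q H x A \<longleftrightarrow>
           w \<in> Omega q x A \<and> set w \<subseteq> Phi_sublevel q H x (PhiSet q H {x} A)"
proof (cases "w \<in> Omega q x A")
  case True
  define h where "h = PhiSet q H {x} A"
  have w: "is_path q w" "hd w = x" "last w \<in> A" using True by (auto simp: Omega_def)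
  have "h \<le> PhiP H w"
    unfolding h_def using PhiSet_singleton_le[OF w(3)] Phi_le_PhiP[OF w(1,2) refl] by (rule order_trans)
  moreover have "PhiP H w \<le> h \<longleftrightarrow> set w \<subseteq> Phi_sublevel q H x h"
  proof
    assume "PhiP H w \<le> h"
    then show "set w \<subseteq> Phi_sublevel q H x h"
      using Phi_le_PhiP_prefix[OF w(1,2), of _ H] by (auto simp: Phi_sublevel_def intro: order_trans)
  next
    assume "set w \<subseteq> Phi_sublevel q H x h"
    then show "PhiP H w \<le> h"
      using H_le_on_Phi_sublevel[OF irr] is_path_nonempty[OF w(1)] by (auto simp: PhiP_le_iff)
  qed
  ultimately show ?thesis using True unfolding Omega_opt_def h_def[symmetric] by auto
qed (simp add: Omega_opt_def)

theorem lemma3p8: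
  fixes q :: "'a::finite \<Rightarrow> 'a \<Rightarrow> real" and H :: "'a \<Rightarrow> real"
    and A :: "'a set" and x :: 'a and w :: "'a list"
  assumes "stochastic q" and "symmetric_kernel q" and "irreducible_kernel q"
    and "\<exists>u v. H u \<noteq> H v"
    and "A \<noteq> {}" and "x \<notin> A"
    and "\<forall>y. (\<forall>p. is_path q p \<and> hd p = x \<and> last p = y \<longrightarrow> set p \<inter> A \<noteq> {}) \<longrightarrow> y \<in> A"
  shows "w \<in> Omega_opt q H x A \<longleftrightarrow> w \<in> Omega q x A \<and> set w \<subseteq> rel_cycle q H A x"
  using Omega_opt_iff_Phi_sublevel[OF assms(3)] rel_cycle_eq_Phi_sublevel[OF assms(2,3,5,6)]
  by simp

end
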